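(* Let $s,m$ be positive integers with $m$ odd, and let $n=sm$. Let $F\in\mathbb{F}_{2^s}[x]$ be a polynomial which, viewed as a function $\mathbb{F}_{2^n}\to\mathbb{F}_{2^n}$, is differentially $(1,4)$-uniform, i.e. $\delta_{F,1}=4$. Then for all $a,b\in\mathbb{F}_{2^s}$ with $a\neq 0$, the equation $F(x+a)+F(x)=b$ has no solution $x\in\mathbb{F}_{2^n}\setminus\mathbb{F}_{2^s}$.
   Context: For a function $F:\mathbb{F}_{p^n}\to\mathbb{F}_{p^n}$ and $c\in\mathbb{F}_{p^n}$, let ${}_c\Delta_F(a,b)=\#\{x\in\mathbb{F}_{p^n}: F(x+a)-cF(x)=b\}$, and the $c$-differential uniformity of $F$ is $\delta_{F,c}=\max\{{}_c\Delta_F(a,b): a,b\in\mathbb{F}_{p^n},\ a\neq 0 \text{ if } c=1\}$. $F$ is called differentially $(c,\delta)$-uniform if $\delta_{F,c}=\delta$. *)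

theory Defs
  imports "HOL-Computational_Algebra.Polynomial"
begin

definition c_Delta :: "'a::{field,finite} \<Rightarrow> ('a \<Rightarrow> 'a) \<Rightarrow> 'a \<Rightarrow> 'a \<Rightarrow> nat" where
  "c_Delta c F a b = card {x. F (x + a) - c * F x = b}"

definition c_diff_uniformity :: "'a::{field,finite} \<Rightarrow> ('a \<Rightarrow> 'a) \<Rightarrow> nat" where
  "c_diff_uniformity c F = Max {c_Delta c F a b | a b. a \<noteq> 0 \<or> c \<noteq> 1}"

text \<open>The subfield of order q^s inside a finite field: roots of X^(q^s) - X.\<close>
definition subfield_pow :: "nat \<Rightarrow> nat \<Rightarrow> 'a::field set" where
  "subfield_pow q s = {x. x ^ (q ^ s) = x}"

end

theory Submission
  imports Defs "HOL-Computational_Algebra.Primes"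
begin

text \<open>
  Let \<open>\<sigma> y = y ^ 2 ^ s\<close>. In characteristic 2 it is additive, commutes with \<open>F\<close> and fixes
  \<open>a\<close> and \<open>b\<close>, so the solution set of \<open>F (x + a) + F x = b\<close> is closed under \<open>\<sigma>\<close> and under
  \<open>x \<mapsto> x + a\<close>; moreover \<open>\<sigma>\<^sup>m = id\<close> on the field with \<open>2 ^ (s * m)\<close> elements. If \<open>\<sigma> x \<noteq> x\<close>,
  the elements \<open>x, \<sigma> x, \<sigma>\<^sup>2 x\<close> are distinct, since \<open>\<sigma>\<^sup>2 x = x\<close> and \<open>\<sigma>\<^sup>m x = x\<close> with \<open>m\<close> odd
  force \<open>\<sigma> x = x\<close>; and no \<open>\<sigma>\<^sup>i x\<close> equals \<open>\<sigma>\<^sup>j x + a\<close>, since \<open>\<sigma>\<^sup>r y = y + a\<close> would give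
  \<open>y = \<sigma>\<^sup>r\<^sup>m y = y + m a = y + a\<close>. So there are six solutions, more than \<open>\<delta>\<^sub>F\<^sub>,\<^sub>1 = 4\<close> allows.
\<close>

lemma power_card_UNIV_eq_self:
  fixes x :: "'a::{field,finite}"
  shows "x ^ card (UNIV :: 'a set) = x"
proof (cases "x = 0")
  case False
  have "x * (\<Prod>y\<in>UNIV-{0}. x * y) = x * x ^ (card (UNIV :: 'a set) - 1) * \<Prod>(UNIV-{0})"
    by (simp add: prod.distrib mult_ac)
  also have "x * x ^ (card (UNIV :: 'a set) - 1) = x ^ card (UNIV :: 'a set)"
    using finite_UNIV_card_ge_0[where 'a = 'a] by (simp flip: power_Suc)
  also have "(\<Prod>y\<in>UNIV-{0}. x * y) = (\<Prod>y\<in>UNIV-{0}. y)"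
    by (rule prod.reindex_bij_witness[of _ "\<lambda>y. y / x" "\<lambda>y. x * y"]) (use False in auto)
  finally show ?thesis
    by simp
qed (use finite_UNIV_card_ge_0[where 'a = 'a] in auto)

lemma CHAR_eq_2_if_card_eq_power_2:
  assumes "card (UNIV :: 'a::{field,finite} set) = 2 ^ n"
  shows "CHAR('a) = 2"
proof -
  have "n \<noteq> 0"
  proof
    assume "n = 0"
    then obtain z :: 'a where "UNIV = {z}"
      using assms card_1_singletonE by auto
    then show False
      by (metis UNIV_I singletonD zero_neq_one)
  qed
  then have "(-1 :: 'a) ^ card (UNIV :: 'a set) = 1"
    using assms by simp
  then have "of_nat 2 = (0 :: 'a)"
    using power_card_UNIV_eq_self[of "-1 :: 'a"] by simp
  then have "CHAR('a) dvd 2"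
    by (simp only: of_nat_eq_0_iff_char_dvd)
  then show ?thesis
    using CHAR_not_1 two_is_prime_nat unfolding prime_nat_iff by (metis One_nat_def)
qed

lemma additive_power_CHAR_power:
  assumes "prime CHAR('a::comm_ring_1)"
  shows "additive (\<lambda>x::'a. x ^ (CHAR('a) ^ t))"
  by unfold_locales (rule freshmans_dream'[OF assms refl])

lemma poly_power_CHAR_power:
  fixes p :: "'a::comm_semiring_1 poly"
  assumes "prime CHAR('a)" and "\<forall>i. coeff p i ^ (CHAR('a) ^ t) = coeff p i"
  shows "poly p (x ^ (CHAR('a) ^ t)) = poly p x ^ (CHAR('a) ^ t)"
  using assms(2)
proof (induction p rule: pCons_induct)
  case (pCons c p)
  have "c ^ (CHAR('a) ^ t) = c"
    using pCons.prems by (metis coeff_pCons_0)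
  moreover have "\<forall>i. coeff p i ^ (CHAR('a) ^ t) = coeff p i"
    using pCons.prems by (metis coeff_pCons_Suc)
  ultimately show ?case
    using pCons.IH by (simp add: freshmans_dream'[OF assms(1) refl] power_mult_distrib)
qed simp

lemma funpow_power_eq_power_power:
  fixes x :: "'a::monoid_mult"
  shows "((\<lambda>y. y ^ k) ^^ j) x = x ^ (k ^ j)"
  by (induction j) (simp_all add: power_mult power_Suc2 del: power_Suc)

lemma funpow_fixpoint:
  assumes "f x = x"
  shows "(f ^^ n) x = x"
  by (induction n) (simp_all add: assms)

lemma funpow_eq_self_if_funpow_2_eq_self:
  assumes "(f ^^ 2) x = x" and "(f ^^ m) x = x" and "odd m"
  shows "f x = x"
proof -
  obtain k where m: "m = Suc (2 * k)"
    using \<open>odd m\<close> by (metis oddE Suc_eq_plus1)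
  have "(f ^^ (2 * k)) x = x"
    using funpow_fixpoint[of "f ^^ 2" x k, OF assms(1)] by (simp add: funpow_mult)
  then show ?thesis
    using assms(2) by (simp add: m)
qed

lemma additive_funpow:
  fixes g :: "'a::ab_group_add \<Rightarrow> 'a"
  assumes "additive g"
  shows "additive (g ^^ k)"
proof unfold_locales
  show "(g ^^ k) (x + y) = (g ^^ k) x + (g ^^ k) y" for x y
    by (induction k) (simp_all add: additive.add[OF assms])
qed

lemma funpow_additive_shift:
  fixes g :: "'a::ring_1 \<Rightarrow> 'a"
  assumes "additive g" and "g a = a" and "g y = y + a"
  shows "(g ^^ k) y = y + of_nat k * a"
  using assms(3)
proof (induction k arbitrary: y)
  case (Suc k)
  have "g (y + a) = (y + a) + a"
    using Suc.prems assms(2) by (simp add: additive.add[OF assms(1)])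
  then have "(g ^^ k) (y + a) = y + a + of_nat k * a"
    by (rule Suc.IH)
  then show ?case
    using Suc.prems by (simp add: funpow_Suc_right algebra_simps del: funpow.simps)
qed simp

lemma of_nat_odd_eq_1_if_CHAR_2:
  assumes "CHAR('a::ring_1) = 2" and "odd m"
  shows "(of_nat m :: 'a) = 1"
proof -
  obtain k where "m = 2 * k + 1"
    using \<open>odd m\<close> by (rule oddE)
  moreover have "(2 :: 'a) = 0"
    using of_nat_CHAR[where 'a = 'a] assms(1) by simp
  ultimately show ?thesis
    by simp
qed

lemma funpow_ne_funpow_add:
  fixes \<sigma> :: "'a::ring_1 \<Rightarrow> 'a"
  assumes char: "CHAR('a) = 2" and add: "additive \<sigma>" and \<sigma>a: "\<sigma> a = a"
    and period: "\<And>y. (\<sigma> ^^ m) y = y" and "odd m" and "a \<noteq> 0"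
  shows "(\<sigma> ^^ i) x \<noteq> (\<sigma> ^^ j) x + a"
proof -
  have no_shift: "(\<sigma> ^^ r) y \<noteq> y + a" for r y
  proof
    assume shift: "(\<sigma> ^^ r) y = y + a"
    have "((\<sigma> ^^ r) ^^ m) y = y"
      using funpow_fixpoint[of "\<sigma> ^^ m" y r] period by (simp add: funpow_mult mult.commute)
    moreover have "((\<sigma> ^^ r) ^^ m) y = y + of_nat m * a"
      using funpow_additive_shift[OF additive_funpow[OF add] funpow_fixpoint[of \<sigma>, OF \<sigma>a] shift] .
    ultimately show False
      using of_nat_odd_eq_1_if_CHAR_2[OF char \<open>odd m\<close>] \<open>a \<noteq> 0\<close> by simp
  qed
  show ?thesis
  proof (cases "i \<le> j")
    case True
    then have "(\<sigma> ^^ j) x = (\<sigma> ^^ (j - i)) ((\<sigma> ^^ i) x)"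
      using funpow_add[of "j - i" i \<sigma>] by simp
    moreover have "- a = a"
      using char by (rule uminus_CHAR_2)
    ultimately show ?thesis
      using no_shift by (metis add_diff_cancel_right' diff_add_cancel diff_minus_eq_add)
  next
    case False
    then have "(\<sigma> ^^ i) x = (\<sigma> ^^ (i - j)) ((\<sigma> ^^ j) x)"
      using funpow_add[of "i - j" j \<sigma>] by simp
    then show ?thesis
      using no_shift by metis
  qed
qed

lemma inj_if_funpow_eq_id:
  assumes "\<And>y. (f ^^ m) y = y" and "m > 0"
  shows "inj f"
proof (rule injI)
  fix u v
  assume "f u = f v"
  then have "(f ^^ m) u = (f ^^ m) v"
    using \<open>m > 0\<close> by (cases m) (simp_all add: funpow_Suc_right del: funpow.simps)
  then show "u = v"
    using assms(1) by simp
qed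

lemma difference_eq_shift_CHAR_2:
  fixes F :: "'a::ring_1 \<Rightarrow> 'a"
  assumes "CHAR('a) = 2" and "F (z + a) - F z = b"
  shows "F (z + a + a) - F (z + a) = b"
proof -
  have neg: "- u = u" for u :: 'a
    using assms(1) by (rule uminus_CHAR_2)
  then have "z + a + a = z"
    by (metis add.assoc add.right_inverse add_0_right)
  then have "F (z + a + a) - F (z + a) = - (F (z + a) - F z)"
    by (subst \<open>z + a + a = z\<close>) simp
  also have "\<dots> = b"
    using assms(2) neg[of b] by simp
  finally show ?thesis .
qed

lemma difference_eq_additive_commuting:
  fixes F \<sigma> :: "'a::ab_group_add \<Rightarrow> 'a"
  assumes "additive \<sigma>" and "\<And>y. F (\<sigma> y) = \<sigma> (F y)" and "\<sigma> a = a" and "\<sigma> b = b"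
    and "F (z + a) - F z = b"
  shows "F (\<sigma> z + a) - F (\<sigma> z) = b"
  using assms(2)[of "z + a"] assms(2)[of z] assms(3-5)
  by (simp add: additive.add[OF assms(1)] flip: additive.diff[OF assms(1)])

lemma card_solutions_ge_6:
  fixes F \<sigma> :: "'a::{field,finite} \<Rightarrow> 'a"
  assumes char: "CHAR('a) = 2" and add: "additive \<sigma>" and comm: "\<And>y. F (\<sigma> y) = \<sigma> (F y)"
    and \<sigma>a: "\<sigma> a = a" and \<sigma>b: "\<sigma> b = b" and period: "\<And>y. (\<sigma> ^^ m) y = y" and "odd m"
    and \<sigma>x: "\<sigma> x \<noteq> x" and "a \<noteq> 0" and sol: "F (x + a) - F x = b"
  shows "6 \<le> card {z. F (z + a) - F z = b}"
proof -
  define S where "S = {z. F (z + a) - F z = b}"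
  have orbit_in_S: "(\<sigma> ^^ i) x \<in> S" for i
    by (induction i) (use sol difference_eq_additive_commuting[where F = F, OF add comm \<sigma>a \<sigma>b] in \<open>auto simp: S_def\<close>)
  have shift_closed: "z + a \<in> S" if "z \<in> S" for z
    using difference_eq_shift_CHAR_2[OF char] that unfolding S_def by blast
  define orbit where "orbit = (\<lambda>i. (\<sigma> ^^ i) x) ` {0, 1, 2}"
  have orbit_eq: "orbit = {x, \<sigma> x, \<sigma> (\<sigma> x)}"
    by (simp add: orbit_def numeral_2_eq_2)
  have "\<sigma> (\<sigma> x) \<noteq> x"
    using funpow_eq_self_if_funpow_2_eq_self[of \<sigma> x m] period \<open>odd m\<close> \<sigma>x
    by (auto simp: numeral_2_eq_2)
  then have "card orbit = 3"
    using \<sigma>x inj_if_funpow_eq_id[OF period odd_pos[OF \<open>odd m\<close>]] by (auto simp: orbit_eq inj_eq)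
  moreover have "card ((\<lambda>z. z + a) ` orbit) = card orbit"
    by (rule card_image) (simp add: inj_on_def)
  moreover have "orbit \<inter> (\<lambda>z. z + a) ` orbit = {}"
    unfolding orbit_def using funpow_ne_funpow_add[OF char add \<sigma>a period \<open>odd m\<close> \<open>a \<noteq> 0\<close>] by blast
  moreover have "orbit \<union> (\<lambda>z. z + a) ` orbit \<subseteq> S"
    unfolding orbit_def using orbit_in_S shift_closed by blast
  ultimately show ?thesis
    unfolding S_def[symmetric]
    by (metis card_Un_disjoint card_mono finite numeral_Bit0 finite_imageI)
qed

lemma c_Delta_le_c_diff_uniformity:
  fixes F :: "'a::{field,finite} \<Rightarrow> 'a"
  assumes "a \<noteq> 0 \<or> c \<noteq> 1"
  shows "c_Delta c F a b \<le> c_diff_uniformity c F"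
  unfolding c_diff_uniformity_def
proof (rule Max_ge)
  have "{c_Delta c F a b |a b. a \<noteq> 0 \<or> c \<noteq> 1} \<subseteq> range (\<lambda>(a, b). c_Delta c F a b)"
    by auto
  then show "finite {c_Delta c F a b |a b. a \<noteq> 0 \<or> c \<noteq> 1}"
    by (rule finite_subset) simp
qed (use assms in blast)

theorem proposition2p1:
  fixes F :: "'a::{field,finite} poly" and s m n :: nat
  assumes "card (UNIV :: 'a set) = 2 ^ n" and "n = s * m" and "s > 0" and "m > 0" and "odd m"
    and "\<forall>i. coeff F i \<in> subfield_pow 2 s"
    and "c_diff_uniformity 1 (poly F) = 4"
  shows "\<forall>a \<in> subfield_pow 2 s. \<forall>b \<in> subfield_pow 2 s. a \<noteq> 0 \<longrightarrow>
           (\<forall>x. x \<notin> subfield_pow 2 s \<longrightarrow> poly F (x + a) + poly F x \<noteq> b)"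
proof (intro ballI impI allI notI)
  fix a b x :: 'a
  assume "a \<in> subfield_pow 2 s" "b \<in> subfield_pow 2 s" "a \<noteq> 0" "x \<notin> subfield_pow 2 s"
    and "poly F (x + a) + poly F x = b"
  define \<sigma> where "\<sigma> y = y ^ (CHAR('a) ^ s)" for y :: 'a
  have char: "CHAR('a) = 2"
    using assms(1) by (rule CHAR_eq_2_if_card_eq_power_2)
  have "6 \<le> card {z. poly F (z + a) - poly F z = b}"
  proof (rule card_solutions_ge_6[OF char, of \<sigma> _ _ _ m])
    show "additive \<sigma>"
      using additive_power_CHAR_power[where 'a = 'a, of s] char by (simp add: \<sigma>_def[abs_def])
    show "poly F (\<sigma> y) = \<sigma> (poly F y)" for y
      using poly_power_CHAR_power[of F s y] assms(6) char by (simp add: \<sigma>_def subfield_pow_def)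
    show "(\<sigma> ^^ m) y = y" for y
      using power_card_UNIV_eq_self[of y] assms(1,2) char
      by (simp add: \<sigma>_def[abs_def] funpow_power_eq_power_power power_mult)
  qed (use \<open>odd m\<close> \<open>a \<noteq> 0\<close> \<open>a \<in> _\<close> \<open>b \<in> _\<close> \<open>x \<notin> _\<close> \<open>poly F (x + a) + poly F x = b\<close> char in
      \<open>simp_all add: \<sigma>_def subfield_pow_def minus_CHAR_2\<close>)
  moreover have "card {z. poly F (z + a) - poly F z = b} \<le> c_diff_uniformity 1 (poly F)"
    using c_Delta_le_c_diff_uniformity[of a 1 "poly F" b] \<open>a \<noteq> 0\<close> by (simp add: c_Delta_def)
  ultimately show False
    using assms(7) by simp
qed

end
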